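(* Let $a>0$, let $v:\mathbb{R}\to[v_0,\infty)$ be continuously differentiable with $v_0>0$, fix $r>a/v_0$, let $C=C([-r,0],\mathbb{R})$ with the maximum norm and $C^1=C^1([-r,0],\mathbb{R})$ with the norm $|\phi|_1=\max|\phi|+\max|\phi'|$. Let $\delta:C\to(0,r)$ be the map assigning to $\phi\in C$ the unique $u\in(0,r)$ with $a=\int_{-u}^0 v(\phi(s))\,ds$; it is continuously differentiable with derivative $D\delta(\phi)\chi=-\int_{-\delta(\phi)}^0 v'(\phi(s))\chi(s)\,ds\,/\,v(\phi(-\delta(\phi)))$. For $\phi\in C^1$ and $\chi\in C$ define $$D_eE(\phi)\chi=\chi(-\delta(\phi))-\phi'(-\delta(\phi))\,D\delta(\phi)\chi .$$ Then the map $C^1\times C\ni(\phi,\chi)\mapsto D_eE(\phi)\chi\in\mathbb{R}$ is continuous.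
   Context: $D_eE(\phi):C\to\mathbb{R}$ is the linear extension to $C$ of the derivative of the continuously differentiable map $E:C^1\to\mathbb{R}$, $E(\phi)=\phi(-\delta(\phi))$. *)

theory Defs
  imports "HOL-Analysis.Analysis"
begin

text \<open>Elements of C([-r,0],R) and C^1([-r,0],R) are represented as functions
  real => real; only their values on [-r,0] matter.\<close>

definition inC :: "real \<Rightarrow> (real \<Rightarrow> real) \<Rightarrow> bool" where
  "inC r \<phi> \<longleftrightarrow> continuous_on {-r..0} \<phi>"

definition dC1 :: "real \<Rightarrow> (real \<Rightarrow> real) \<Rightarrow> real \<Rightarrow> real" where
  "dC1 r \<phi> s = vector_derivative \<phi> (at s within {-r..0})"

definition inC1 :: "real \<Rightarrow> (real \<Rightarrow> real) \<Rightarrow> bool" where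
  "inC1 r \<phi> \<longleftrightarrow> continuous_on {-r..0} \<phi>
     \<and> (\<forall>s\<in>{-r..0}. \<phi> differentiable (at s within {-r..0}))
     \<and> continuous_on {-r..0} (dC1 r \<phi>)"

definition supnorm :: "real \<Rightarrow> (real \<Rightarrow> real) \<Rightarrow> real" where
  "supnorm r \<phi> = (SUP s\<in>{-r..0}. \<bar>\<phi> s\<bar>)"

definition norm1 :: "real \<Rightarrow> (real \<Rightarrow> real) \<Rightarrow> real" where
  "norm1 r \<phi> = supnorm r \<phi> + supnorm r (dC1 r \<phi>)"

definition delay :: "real \<Rightarrow> real \<Rightarrow> (real \<Rightarrow> real) \<Rightarrow> (real \<Rightarrow> real) \<Rightarrow> real" where
  "delay a r v \<phi> = (THE u. u \<in> {0<..<r} \<and> a = integral {-u..0} (\<lambda>s. v (\<phi> s)))"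

definition Ddelay :: "real \<Rightarrow> real \<Rightarrow> (real \<Rightarrow> real) \<Rightarrow> (real \<Rightarrow> real)
     \<Rightarrow> (real \<Rightarrow> real) \<Rightarrow> (real \<Rightarrow> real) \<Rightarrow> real" where
  "Ddelay a r v v' \<phi> \<xi> =
     - integral {-(delay a r v \<phi>)..0} (\<lambda>s. v' (\<phi> s) * \<xi> s) / v (\<phi> (- delay a r v \<phi>))"

definition DeE :: "real \<Rightarrow> real \<Rightarrow> (real \<Rightarrow> real) \<Rightarrow> (real \<Rightarrow> real)
     \<Rightarrow> (real \<Rightarrow> real) \<Rightarrow> (real \<Rightarrow> real) \<Rightarrow> real" where
  "DeE a r v v' \<phi> \<xi> =
     \<xi> (- delay a r v \<phi>) - dC1 r \<phi> (- delay a r v \<phi>) * Ddelay a r v v' \<phi> \<xi>"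

end

theory Submission
  imports Defs
begin

text \<open>The threshold integral \<open>I\<^sub>\<phi>(u) = \<integral>\<^bsub>[-u,0]\<^esub> v(\<phi> s) ds\<close> grows in \<open>u\<close> with slope at least
  \<open>v\<^sub>0\<close>. Comparing \<open>I\<^sub>\<phi>\<close> and \<open>I\<^sub>\<psi>\<close> at \<open>\<delta>(\<psi>)\<close> therefore gives
  \<open>v\<^sub>0 |\<delta>(\<psi>) - \<delta>(\<phi>)| \<le> r max |v\<circ>\<psi> - v\<circ>\<phi>|\<close>, so \<open>\<delta>\<close> is continuous under uniform
  convergence. All other ingredients of \<open>D\<^sub>eE(\<phi>)\<chi>\<close> (evaluating \<open>\<chi>\<close> and \<open>\<phi>'\<close> at the moving
  point \<open>-\<delta>(\<phi>)\<close>, integrating \<open>v'(\<phi>)\<chi>\<close> over the moving interval \<open>[-\<delta>(\<phi>), 0]\<close>, and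
  dividing by \<open>v(\<phi>(-\<delta>(\<phi>))) \<ge> v\<^sub>0\<close>) are continuous under uniform convergence of \<open>\<phi>\<close>,
  \<open>\<phi>'\<close> and \<open>\<chi>\<close> on \<open>[-r, 0]\<close>, which is what convergence in \<open>C\<^sup>1 \<times> C\<close> amounts to.\<close>

lemma eventually_INF_principal_antimono:
  fixes S :: "real \<Rightarrow> 'a set"
  assumes "\<And>\<eta> \<eta>'. 0 < \<eta> \<Longrightarrow> \<eta> \<le> \<eta>' \<Longrightarrow> S \<eta> \<subseteq> S \<eta>'"
  shows "eventually P (INF \<eta>\<in>{0<..}. principal (S \<eta>)) \<longleftrightarrow> (\<exists>\<eta>>0. \<forall>p\<in>S \<eta>. P p)"
proof (subst eventually_INF_base)
  fix x y :: real assume "x \<in> {0<..}" "y \<in> {0<..}"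
  then show "\<exists>z\<in>{0<..}. principal (S z) \<le> inf (principal (S x)) (principal (S y))"
    using assms by (intro bexI[of _ "min x y"]) auto
qed (auto simp: eventually_principal)

lemma uniform_limit_INF_principal:
  assumes "\<And>\<eta> p s. 0 < \<eta> \<Longrightarrow> p \<in> S \<eta> \<Longrightarrow> s \<in> A \<Longrightarrow> dist (G p s) (g s) < \<eta>"
  shows "uniform_limit A G g (INF \<eta>\<in>{0<..}. principal (S \<eta>))"
proof (rule uniform_limitI)
  fix e :: real assume "0 < e"
  then show "\<forall>\<^sub>F p in (INF \<eta>\<in>{0<..}. principal (S \<eta>)). \<forall>s\<in>A. dist (G p s) (g s) < e"
    using assms by (intro eventually_INF1[of e]) (auto simp: eventually_principal)
qed

lemma tendsto_uniform_limit_along: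
  fixes G :: "'x \<Rightarrow> 'a::topological_space \<Rightarrow> 'b::real_normed_vector"
  assumes lim: "uniform_limit S G g F" and g: "continuous_on S g"
    and T: "(T \<longlongrightarrow> t) F" and T_in: "eventually (\<lambda>x. T x \<in> S) F" and t: "t \<in> S"
  shows "((\<lambda>x. G x (T x)) \<longlongrightarrow> g t) F"
proof -
  have "((\<lambda>x. G x (T x) - g (T x)) \<longlongrightarrow> 0) F"
  proof (rule tendstoI)
    fix e :: real assume "0 < e"
    from uniform_limitD[OF lim this] T_in
    show "eventually (\<lambda>x. dist (G x (T x) - g (T x)) 0 < e) F"
      by eventually_elim (simp add: dist_norm)
  qed
  moreover have "((\<lambda>x. g (T x)) \<longlongrightarrow> g t) F"
    using continuous_on_tendsto_compose[OF g T t T_in] .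
  ultimately show ?thesis
    using tendsto_add by fastforce
qed

lemma uniform_limit_compose_continuous:
  fixes h :: "'b::{real_normed_vector,heine_borel} \<Rightarrow> 'c::metric_space"
  assumes lim: "uniform_limit S G g F" and "compact S" "continuous_on S g"
    and h: "continuous_on UNIV h"
  shows "uniform_limit S (\<lambda>x s. h (G x s)) (\<lambda>s. h (g s)) F"
proof -
  obtain B where B: "\<And>s. s \<in> S \<Longrightarrow> norm (g s) \<le> B"
    using compact_imp_bounded[OF compact_continuous_image] assms(2,3)
    by (metis bounded_iff image_eqI)
  let ?U = "cball 0 (B + 1)"
  have "uniformly_continuous_on ?U h"
    by (intro compact_uniformly_continuous continuous_on_subset[OF h]) auto
  moreover have "\<forall>\<^sub>F x in F. G x ` S \<subseteq> ?U"
    using uniform_limitD[OF lim zero_less_one]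
  proof eventually_elim
    case (elim x)
    show ?case
    proof
      fix y assume "y \<in> G x ` S"
      then obtain s where "s \<in> S" "y = G x s" by blast
      then show "y \<in> ?U"
        using elim B[of s] norm_triangle_ineq2[of "G x s" "g s"] by (auto simp: dist_norm)
    qed
  qed
  moreover have "g ` S \<subseteq> ?U"
    by (fastforce dest: B)
  ultimately show ?thesis
    using uniform_limit_compose[OF lim] by (simp add: o_def)
qed

lemma abs_integral_diff_le:
  fixes f g :: "real \<Rightarrow> real"
  assumes f: "continuous_on {a..b} f" and g: "continuous_on {a..b} g" and x: "x \<in> {a..b}"
    and le: "\<And>s. s \<in> {a..b} \<Longrightarrow> \<bar>f s - g s\<bar> \<le> c"
  shows "\<bar>integral {x..b} f - integral {x..b} g\<bar> \<le> c * (b - x)"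
proof -
  have sub: "{x..b} \<subseteq> {a..b}"
    using x by auto
  have "integral {x..b} f - integral {x..b} g = integral {x..b} (\<lambda>s. f s - g s)"
    using continuous_on_subset[OF f sub] continuous_on_subset[OF g sub]
    by (simp add: integral_diff integrable_continuous_real)
  also have "\<bar>\<dots>\<bar> \<le> c * (b - x)"
    using integral_bound[of x b "\<lambda>s. f s - g s" c] x sub le
      continuous_on_diff[OF continuous_on_subset[OF f sub] continuous_on_subset[OF g sub]]
    by auto
  finally show ?thesis .
qed

lemma integral_increment_ge:
  fixes w :: "real \<Rightarrow> real"
  assumes w: "continuous_on {a..b} w" and ge: "\<And>s. s \<in> {a..b} \<Longrightarrow> m \<le> w s"
    and "a \<le> x" "x \<le> y" "y \<le> b"
  shows "m * (y - x) \<le> integral {x..b} w - integral {y..b} w"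
proof -
  have int: "w integrable_on {x..b}"
    by (rule integrable_continuous_real, rule continuous_on_subset[OF w]) (use assms in auto)
  have "integral {x..y} w + integral {y..b} w = integral {x..b} w"
    using Henstock_Kurzweil_Integration.integral_combine[OF _ _ int] assms by simp
  moreover have "integral {x..y} (\<lambda>_. m) \<le> integral {x..y} w"
    by (rule integral_le) (use assms integrable_on_subinterval[OF int] in auto)
  ultimately show ?thesis
    using assms by (simp add: mult.commute)
qed

lemma abs_diff_le_integral_diff:
  fixes w :: "real \<Rightarrow> real"
  assumes w: "continuous_on {a..b} w" and ge: "\<And>s. s \<in> {a..b} \<Longrightarrow> m \<le> w s" and "0 \<le> m"
    and "x \<in> {a..b}" "y \<in> {a..b}"
  shows "m * \<bar>x - y\<bar> \<le> \<bar>integral {x..b} w - integral {y..b} w\<bar>"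
proof (cases "x \<le> y")
  case True
  then show ?thesis
    using integral_increment_ge[OF w ge, of x y] assms by auto
next
  case False
  then show ?thesis
    using integral_increment_ge[OF w ge, of y x] assms by auto
qed

lemma tendsto_integral_uniform_limit:
  fixes G :: "'x \<Rightarrow> real \<Rightarrow> real"
  assumes lim: "uniform_limit {a..b} G g F" and g: "continuous_on {a..b} g"
    and G: "eventually (\<lambda>x. continuous_on {a..b} (G x)) F"
    and T: "(T \<longlongrightarrow> t) F" and T_in: "eventually (\<lambda>x. T x \<in> {a..b}) F" and t: "t \<in> {a..b}"
  shows "((\<lambda>x. integral {T x..b} (G x)) \<longlongrightarrow> integral {t..b} g) F"
proof -
  have "((\<lambda>x. integral {T x..b} (G x) - integral {T x..b} g) \<longlongrightarrow> 0) F"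
  proof (rule tendstoI)
    fix e :: real assume "0 < e"
    define c where "c = e / (b - a + 1)"
    have "0 < c" "c * (b - a) < e"
      using \<open>0 < e\<close> t by (auto simp: c_def field_simps)
    from uniform_limitD[OF lim \<open>0 < c\<close>] G T_in
    show "eventually (\<lambda>x. dist (integral {T x..b} (G x) - integral {T x..b} g) 0 < e) F"
    proof eventually_elim
      case (elim x)
      have "\<bar>integral {T x..b} (G x) - integral {T x..b} g\<bar> \<le> c * (b - T x)"
        using elim g by (intro abs_integral_diff_le) (auto simp: dist_real_def less_imp_le)
      also have "\<dots> \<le> c * (b - a)"
        using elim \<open>0 < c\<close> by (intro mult_left_mono) auto
      finally show ?case
        using \<open>c * (b - a) < e\<close> by simp
    qed
  qed
  moreover have "((\<lambda>x. integral {T x..b} g) \<longlongrightarrow> integral {t..b} g) F"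
    using continuous_on_tendsto_compose[OF indefinite_integral_continuous_1' T t T_in]
      integrable_continuous_real[OF g] by blast
  ultimately show ?thesis
    using tendsto_add by fastforce
qed

lemma inC_diff: "inC r f \<Longrightarrow> inC r g \<Longrightarrow> inC r (\<lambda>s. f s - g s)"
  unfolding inC_def by (rule continuous_on_diff)

lemma continuous_on_compose_inC:
  "continuous_on UNIV h \<Longrightarrow> inC r \<phi> \<Longrightarrow> continuous_on {-r..0} (\<lambda>s. h (\<phi> s))"
  unfolding inC_def by (rule continuous_on_compose2) auto

lemma abs_le_supnorm:
  assumes "inC r h" "s \<in> {-r..0}"
  shows "\<bar>h s\<bar> \<le> supnorm r h"
proof -
  have "bounded ((\<lambda>s. \<bar>h s\<bar>) ` {-r..0})"
    using assms(1) unfolding inC_def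
    by (intro compact_imp_bounded compact_continuous_image continuous_intros) auto
  then show ?thesis
    unfolding supnorm_def using assms(2) by (intro cSUP_upper bounded_imp_bdd_above)
qed

lemma supnorm_nonneg:
  assumes "inC r h" "0 \<le> r"
  shows "0 \<le> supnorm r h"
  using abs_le_supnorm[OF assms(1), of 0] assms(2) by force

lemma dC1_has_vector_derivative:
  assumes "inC1 r \<phi>" "s \<in> {-r..0}"
  shows "(\<phi> has_vector_derivative dC1 r \<phi> s) (at s within {-r..0})"
  using assms vector_derivative_works unfolding inC1_def dC1_def by blast

lemma dC1_diff:
  assumes "inC1 r \<psi>" "inC1 r \<phi>" "0 < r" "s \<in> {-r..0}"
  shows "dC1 r (\<lambda>s. \<psi> s - \<phi> s) s = dC1 r \<psi> s - dC1 r \<phi> s"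
proof -
  have "((\<lambda>s. \<psi> s - \<phi> s) has_vector_derivative dC1 r \<psi> s - dC1 r \<phi> s) (at s within {-r..0})"
    using dC1_has_vector_derivative[OF assms(1,4)] dC1_has_vector_derivative[OF assms(2,4)]
    by (rule has_vector_derivative_diff)
  then show ?thesis
    unfolding dC1_def using assms(3,4) by (intro vector_derivative_within_closed_interval) auto
qed

lemma
  assumes "inC1 r \<psi>" "inC1 r \<phi>" "0 < r" "s \<in> {-r..0}"
  shows abs_diff_le_norm1: "\<bar>\<psi> s - \<phi> s\<bar> \<le> norm1 r (\<lambda>s. \<psi> s - \<phi> s)"
    and abs_dC1_diff_le_norm1: "\<bar>dC1 r \<psi> s - dC1 r \<phi> s\<bar> \<le> norm1 r (\<lambda>s. \<psi> s - \<phi> s)"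
proof -
  have "inC r (\<lambda>s. \<psi> s - \<phi> s)"
    using assms(1,2) by (intro inC_diff) (auto simp: inC1_def inC_def)
  moreover have "inC r (dC1 r (\<lambda>s. \<psi> s - \<phi> s))"
    using assms(1,2) unfolding inC1_def inC_def
    by (auto intro: continuous_on_eq[OF continuous_on_diff] simp: dC1_diff[OF assms(1-3)])
  ultimately show "\<bar>\<psi> s - \<phi> s\<bar> \<le> norm1 r (\<lambda>s. \<psi> s - \<phi> s)"
    and "\<bar>dC1 r \<psi> s - dC1 r \<phi> s\<bar> \<le> norm1 r (\<lambda>s. \<psi> s - \<phi> s)"
    using abs_le_supnorm supnorm_nonneg assms(3,4) dC1_diff[OF assms]
    unfolding norm1_def by (smt (verit))+
qed

locale threshold_delay =
  fixes a r v0 :: real and v :: "real \<Rightarrow> real"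
  assumes a_pos: "0 < a" and v0_pos: "0 < v0" and v_ge: "\<And>x. v0 \<le> v x"
    and v_cont: "continuous_on UNIV v" and r_gt: "a / v0 < r"
begin

lemma r_pos: "0 < r"
  using r_gt a_pos v0_pos by (smt (verit) divide_pos_pos)

lemma delay_spec:
  assumes "inC r \<phi>"
  shows "delay a r v \<phi> \<in> {0<..<r} \<and> a = integral {- delay a r v \<phi>..0} (\<lambda>s. v (\<phi> s))"
proof -
  let ?I = "\<lambda>x. integral {x..0} (\<lambda>s. v (\<phi> s))"
  have W: "continuous_on {-r..0} (\<lambda>s. v (\<phi> s))"
    using continuous_on_compose_inC[OF v_cont assms] .
  have "v0 * r \<le> ?I (-r)"
    using integral_increment_ge[OF W v_ge, of "-r" 0] r_pos by simp
  moreover have "a < v0 * r"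
    using r_gt v0_pos by (simp add: field_simps)
  ultimately obtain x where x: "-r \<le> x" "x \<le> 0" "?I x = a"
    using IVT2'[of ?I 0 a "-r"] indefinite_integral_continuous_1'[OF integrable_continuous_real[OF W]]
      a_pos r_pos by auto
  then have "-x \<in> {0<..<r}"
    using \<open>v0 * r \<le> ?I (-r)\<close> \<open>a < v0 * r\<close> a_pos by (cases "x = 0"; cases "x = -r") auto
  moreover have "u = -x" if "u \<in> {0<..<r}" "a = ?I (-u)" for u
    using abs_diff_le_integral_diff[OF W v_ge, of "-u" x] that x v0_pos by (auto simp: mult_le_0_iff)
  ultimately have "\<exists>!u. u \<in> {0<..<r} \<and> a = ?I (-u)"
    using x by (intro ex1I[of _ "-x"]) auto
  then show ?thesis
    unfolding delay_def by (rule theI')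
qed

lemma minus_delay_mem: "inC r \<phi> \<Longrightarrow> - delay a r v \<phi> \<in> {-r..0}"
  using delay_spec[of \<phi>] by auto

lemma delay_tendsto:
  assumes \<phi>: "inC r \<phi>" and \<Psi>: "eventually (\<lambda>x. inC r (\<Psi> x)) F"
    and lim: "uniform_limit {-r..0} \<Psi> \<phi> F"
  shows "((\<lambda>x. delay a r v (\<Psi> x)) \<longlongrightarrow> delay a r v \<phi>) F"
proof (rule tendstoI)
  fix e :: real assume "0 < e"
  then have c: "0 < v0 * e / r"
    using v0_pos r_pos by simp
  have "uniform_limit {-r..0} (\<lambda>x s. v (\<Psi> x s)) (\<lambda>s. v (\<phi> s)) F"
    using \<phi> v_cont unfolding inC_def by (intro uniform_limit_compose_continuous[OF lim]) auto
  from uniform_limitD[OF this c] \<Psi>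
  show "eventually (\<lambda>x. dist (delay a r v (\<Psi> x)) (delay a r v \<phi>) < e) F"
  proof eventually_elim
    case (elim x)
    let ?D = "delay a r v (\<Psi> x)" and ?d = "delay a r v \<phi>"
    have W: "continuous_on {-r..0} (\<lambda>s. v (\<phi> s))" "continuous_on {-r..0} (\<lambda>s. v (\<Psi> x s))"
      using continuous_on_compose_inC[OF v_cont] \<phi> elim by auto
    have D: "?D \<in> {0<..<r}" "a = integral {-?D..0} (\<lambda>s. v (\<Psi> x s))"
      using delay_spec elim by auto
    have d: "?d \<in> {0<..<r}" "a = integral {-?d..0} (\<lambda>s. v (\<phi> s))"
      using delay_spec \<phi> by auto
    have "v0 * \<bar>-?D - -?d\<bar> \<le> \<bar>integral {-?D..0} (\<lambda>s. v (\<phi> s)) - integral {-?d..0} (\<lambda>s. v (\<phi> s))\<bar>"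
      using D d v0_pos by (intro abs_diff_le_integral_diff[OF W(1) v_ge]) auto
    also have "\<dots> = \<bar>integral {-?D..0} (\<lambda>s. v (\<Psi> x s)) - integral {-?D..0} (\<lambda>s. v (\<phi> s))\<bar>"
      using D d by simp
    also have "\<dots> \<le> v0 * e / r * (0 - -?D)"
      using elim D by (intro abs_integral_diff_le[OF W(2,1)]) (auto simp: dist_real_def less_imp_le)
    also have "\<dots> < v0 * e"
      using mult_strict_left_mono[OF _ c, of ?D r] D r_pos by simp
    finally show ?case
      using v0_pos by (simp add: dist_real_def)
  qed
qed

lemma Ddelay_tendsto:
  assumes v': "continuous_on UNIV v'" and \<phi>: "inC r \<phi>" and \<xi>: "inC r \<xi>"
    and ev: "eventually (\<lambda>x. inC r (\<Psi> x) \<and> inC r (\<Omega> x)) F"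
    and \<Psi>: "uniform_limit {-r..0} \<Psi> \<phi> F" and \<Omega>: "uniform_limit {-r..0} \<Omega> \<xi> F"
  shows "((\<lambda>x. Ddelay a r v v' (\<Psi> x) (\<Omega> x)) \<longlongrightarrow> Ddelay a r v v' \<phi> \<xi>) F"
proof -
  have compose: "uniform_limit {-r..0} (\<lambda>x s. h (\<Psi> x s)) (\<lambda>s. h (\<phi> s)) F" if "continuous_on UNIV h" for h
    using \<phi> that unfolding inC_def by (intro uniform_limit_compose_continuous[OF \<Psi>]) auto
  have bounded: "bounded (f ` {-r..0})" if "continuous_on {-r..0} f" for f :: "real \<Rightarrow> real"
    using that by (intro compact_imp_bounded compact_continuous_image) auto
  have \<xi>_cont: "continuous_on {-r..0} \<xi>"
    using \<xi> unfolding inC_def .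
  have delay_lim: "((\<lambda>x. delay a r v (\<Psi> x)) \<longlongrightarrow> delay a r v \<phi>) F"
    using \<phi> ev \<Psi> by (intro delay_tendsto) (auto elim: eventually_mono)
  have delay_in: "eventually (\<lambda>x. - delay a r v (\<Psi> x) \<in> {-r..0}) F" "- delay a r v \<phi> \<in> {-r..0}"
    using ev \<phi> by (auto elim!: eventually_mono simp del: atLeastAtMost_iff intro: minus_delay_mem)
  have "((\<lambda>x. integral {- delay a r v (\<Psi> x)..0} (\<lambda>s. v' (\<Psi> x s) * \<Omega> x s))
      \<longlongrightarrow> integral {- delay a r v \<phi>..0} (\<lambda>s. v' (\<phi> s) * \<xi> s)) F"
  proof (rule tendsto_integral_uniform_limit)
    show "uniform_limit {-r..0} (\<lambda>x s. v' (\<Psi> x s) * \<Omega> x s) (\<lambda>s. v' (\<phi> s) * \<xi> s) F"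
      using continuous_on_compose_inC[OF v' \<phi>] \<xi>_cont by (intro uniform_lim_mult compose v' \<Omega> bounded)
    show "eventually (\<lambda>x. continuous_on {-r..0} (\<lambda>s. v' (\<Psi> x s) * \<Omega> x s)) F"
      using ev by eventually_elim (auto simp: inC_def intro!: continuous_on_mult continuous_on_compose_inC[OF v'])
  qed (use continuous_on_compose_inC[OF v' \<phi>] \<xi>_cont delay_lim delay_in in \<open>auto intro: continuous_on_mult tendsto_minus\<close>)
  moreover have "((\<lambda>x. v (\<Psi> x (- delay a r v (\<Psi> x)))) \<longlongrightarrow> v (\<phi> (- delay a r v \<phi>))) F"
    using delay_lim delay_in
    by (intro tendsto_uniform_limit_along[OF compose[OF v_cont] continuous_on_compose_inC[OF v_cont \<phi>]])
      (auto intro: tendsto_minus)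
  moreover have "v (\<phi> (- delay a r v \<phi>)) \<noteq> 0"
    using v_ge[of "\<phi> (- delay a r v \<phi>)"] v0_pos by linarith
  ultimately show ?thesis
    unfolding Ddelay_def by (intro tendsto_divide tendsto_minus)
qed

lemma DeE_tendsto:
  assumes v': "continuous_on UNIV v'" and \<phi>: "inC1 r \<phi>" and \<xi>: "inC r \<xi>"
    and ev: "eventually (\<lambda>x. inC1 r (\<Psi> x) \<and> inC r (\<Omega> x)) F"
    and \<Psi>: "uniform_limit {-r..0} \<Psi> \<phi> F"
    and d\<Psi>: "uniform_limit {-r..0} (\<lambda>x. dC1 r (\<Psi> x)) (dC1 r \<phi>) F"
    and \<Omega>: "uniform_limit {-r..0} \<Omega> \<xi> F"
  shows "((\<lambda>x. DeE a r v v' (\<Psi> x) (\<Omega> x)) \<longlongrightarrow> DeE a r v v' \<phi> \<xi>) F"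
proof -
  have \<phi>_C: "inC r \<phi>" and ev_C: "eventually (\<lambda>x. inC r (\<Psi> x) \<and> inC r (\<Omega> x)) F"
    using \<phi> ev unfolding inC1_def inC_def by (auto elim: eventually_mono)
  have delay_lim: "((\<lambda>x. - delay a r v (\<Psi> x)) \<longlongrightarrow> - delay a r v \<phi>) F"
    using \<phi>_C ev_C \<Psi> by (intro tendsto_minus delay_tendsto) (auto elim: eventually_mono)
  have delay_in: "eventually (\<lambda>x. - delay a r v (\<Psi> x) \<in> {-r..0}) F" "- delay a r v \<phi> \<in> {-r..0}"
    using ev_C \<phi>_C by (auto elim!: eventually_mono simp del: atLeastAtMost_iff intro: minus_delay_mem)
  have "((\<lambda>x. \<Omega> x (- delay a r v (\<Psi> x))) \<longlongrightarrow> \<xi> (- delay a r v \<phi>)) F"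
    using \<xi> unfolding inC_def by (rule tendsto_uniform_limit_along[OF \<Omega> _ delay_lim delay_in])
  moreover have "((\<lambda>x. dC1 r (\<Psi> x) (- delay a r v (\<Psi> x))) \<longlongrightarrow> dC1 r \<phi> (- delay a r v \<phi>)) F"
    using \<phi> unfolding inC1_def by (intro tendsto_uniform_limit_along[OF d\<Psi> _ delay_lim delay_in]) auto
  moreover have "((\<lambda>x. Ddelay a r v v' (\<Psi> x) (\<Omega> x)) \<longlongrightarrow> Ddelay a r v v' \<phi> \<xi>) F"
    by (rule Ddelay_tendsto[OF v' \<phi>_C \<xi> ev_C \<Psi> \<Omega>])
  ultimately show ?thesis
    unfolding DeE_def by (intro tendsto_diff tendsto_mult)
qed

end

theorem proposition2p2:
  fixes a r v0 :: real and v v' :: "real \<Rightarrow> real"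
  assumes a_pos: "a > 0"
    and v0_pos: "v0 > 0"
    and v_ge: "\<And>x. v x \<ge> v0"
    and v_deriv: "\<And>x. (v has_real_derivative v' x) (at x)"
    and v'_cont: "continuous_on UNIV v'"
    and r_gt: "r > a / v0"
  shows "\<forall>\<phi> \<xi>. inC1 r \<phi> \<and> inC r \<xi> \<longrightarrow>
           (\<forall>\<epsilon>>0. \<exists>\<eta>>0. \<forall>\<psi> \<omega>. inC1 r \<psi> \<and> inC r \<omega>
               \<and> norm1 r (\<lambda>s. \<psi> s - \<phi> s) < \<eta> \<and> supnorm r (\<lambda>s. \<omega> s - \<xi> s) < \<eta>
               \<longrightarrow> \<bar>DeE a r v v' \<psi> \<omega> - DeE a r v v' \<phi> \<xi>\<bar> < \<epsilon>)"
proof (intro allI impI)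
  fix \<phi> \<xi> :: "real \<Rightarrow> real"
  assume "inC1 r \<phi> \<and> inC r \<xi>"
  then have \<phi>: "inC1 r \<phi>" and \<xi>: "inC r \<xi>" by auto
  \<comment> \<open>Differentiability of \<open>v\<close> is needed only for its continuity; \<open>v'\<close> enters merely as a continuous function.\<close>
  have "continuous_on UNIV v"
    using v_deriv by (intro continuous_at_imp_continuous_on) (auto intro: DERIV_isCont)
  then interpret threshold_delay a r v0 v
    using a_pos v0_pos v_ge r_gt by unfold_locales auto
  define S where "S \<eta> = {(\<psi>, \<omega>). inC1 r \<psi> \<and> inC r \<omega>
      \<and> norm1 r (\<lambda>s. \<psi> s - \<phi> s) < \<eta> \<and> supnorm r (\<lambda>s. \<omega> s - \<xi> s) < \<eta>}" for \<eta>
  define F where "F = (INF \<eta>\<in>{0<..}. principal (S \<eta>))"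
  have ev_F: "eventually P F \<longleftrightarrow> (\<exists>\<eta>>0. \<forall>p\<in>S \<eta>. P p)" for P
    unfolding F_def by (rule eventually_INF_principal_antimono) (auto simp: S_def)
  have lim: "((\<lambda>p. DeE a r v v' (fst p) (snd p)) \<longlongrightarrow> DeE a r v v' \<phi> \<xi>) F"
  proof (rule DeE_tendsto[OF v'_cont \<phi> \<xi>])
    show "eventually (\<lambda>p. inC1 r (fst p) \<and> inC r (snd p)) F"
      unfolding ev_F by (auto simp: S_def intro: exI[of _ 1])
    show "uniform_limit {-r..0} fst \<phi> F"
      unfolding F_def using abs_diff_le_norm1[OF _ \<phi> r_pos]
      by (intro uniform_limit_INF_principal) (fastforce simp: S_def dist_real_def)
    show "uniform_limit {-r..0} (\<lambda>p. dC1 r (fst p)) (dC1 r \<phi>) F"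
      unfolding F_def using abs_dC1_diff_le_norm1[OF _ \<phi> r_pos]
      by (intro uniform_limit_INF_principal) (fastforce simp: S_def dist_real_def)
    show "uniform_limit {-r..0} snd \<xi> F"
      unfolding F_def using abs_le_supnorm[OF inC_diff[OF _ \<xi>]]
      by (intro uniform_limit_INF_principal) (fastforce simp: S_def dist_real_def)
  qed
  fix \<epsilon> :: real assume "0 < \<epsilon>"
  from tendstoD[OF lim this] show "\<exists>\<eta>>0. \<forall>\<psi> \<omega>. inC1 r \<psi> \<and> inC r \<omega>
      \<and> norm1 r (\<lambda>s. \<psi> s - \<phi> s) < \<eta> \<and> supnorm r (\<lambda>s. \<omega> s - \<xi> s) < \<eta>
      \<longrightarrow> \<bar>DeE a r v v' \<psi> \<omega> - DeE a r v v' \<phi> \<xi>\<bar> < \<epsilon>"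
    unfolding ev_F by (fastforce simp: S_def dist_real_def)
qed

end
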